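(* Let $A\in\mathbb{C}^{n\times n}$ and $m\in\mathbb{N}=\{1,2,\dots\}$. Then the system of equations in $X\in\mathbb{C}^{n\times n}$ $$XAX=X,\qquad AX=(A^{\mathrm{cEP}})^mA^mP_{A^m},\qquad XA=(A^{\mathrm{cEP}})^{m+1}A^mP_{A^m}A$$ is consistent and its unique solution is $X=A^{\#_m}$.
   Context: For $A\in\mathbb{C}^{n\times n}$: $A^\dagger$ Moore–Penrose inverse, $P_A=AA^\dagger$, $\mathcal{R}(\cdot)$ column space. The index $k=\mathrm{Ind}(A)$ is the smallest nonnegative integer with $\mathcal{R}(A^k)=\mathcal{R}(A^{k+1})$ ($A^0=I_n$). The core-EP inverse $A^{\mathrm{cEP}}$ is the unique $X$ with $XAX=X$ and $\mathcal{R}(X)=\mathcal{R}(X^* )=\mathcal{R}(A^k)$. For $m\in\mathbb{N}$, the $m$-weak group inverse is $A^{\mathrm{WG}_m}:=(A^{\mathrm{cEP}})^{m+1}A^m$ and the $m$-weak core inverse is $A^{\#_m}:=A^{\mathrm{WG}_m}P_{A^m}$. *)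

theory Defs
  imports "HOL-Analysis.Analysis"
begin

text \<open>Square complex matrices of size n are represented as complex^'n^'n,
with n = CARD('n) arbitrary.\<close>

type_synonym 'n cmat = "complex^'n^'n"

definition cadj :: "'n::finite cmat \<Rightarrow> 'n cmat" where
  "cadj A = (\<chi> i j. cnj (A $ j $ i))"

primrec cmatpow :: "'n::finite cmat \<Rightarrow> nat \<Rightarrow> 'n cmat" where
  "cmatpow A 0 = mat 1"
| "cmatpow A (Suc k) = cmatpow A k ** A"

definition colspace :: "'n::finite cmat \<Rightarrow> (complex^'n) set" where
  "colspace A = range (\<lambda>x. A *v x)"

definition mp_inv :: "'n::finite cmat \<Rightarrow> 'n cmat" where
  "mp_inv A = (THE X. A ** X ** A = A \<and> X ** A ** X = X \<and>
                      cadj (A ** X) = A ** X \<and> cadj (X ** A) = X ** A)"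

definition proj :: "'n::finite cmat \<Rightarrow> 'n cmat" where
  "proj A = A ** mp_inv A"

definition ind :: "'n::finite cmat \<Rightarrow> nat" where
  "ind A = (LEAST k. colspace (cmatpow A k) = colspace (cmatpow A (Suc k)))"

definition core_EP :: "'n::finite cmat \<Rightarrow> 'n cmat" where
  "core_EP A = (THE X. X ** A ** X = X \<and>
                       colspace X = colspace (cmatpow A (ind A)) \<and>
                       colspace (cadj X) = colspace (cmatpow A (ind A)))"

definition m_weak_group :: "'n::finite cmat \<Rightarrow> nat \<Rightarrow> 'n cmat" where
  "m_weak_group A m = cmatpow (core_EP A) (Suc m) ** cmatpow A m"

definition m_weak_core :: "'n::finite cmat \<Rightarrow> nat \<Rightarrow> 'n cmat" where
  "m_weak_core A m = m_weak_group A m ** proj (cmatpow A m)"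

end

(* Write C for the core-EP inverse of A, k for the index and P for the projector P_{A^m}.
   Everything rests on three identities: C A C = C, A C^2 = C, and P C = C, the last because
   the range of C is that of A^k, which lies in the range of A^m.  For W = C^(m+1) A^m P they
   give A W = C^m A^m P and W A W = W, so any solution of the system satisfies
   X = (X A) X = W (A X) = W A W = W, and W itself is one.

   The identities come from the explicit form C = B W G, where B = A^k = A B W and G is the
   Moore-Penrose inverse of B: this matrix is the unique outer inverse of A whose range and
   whose adjoint's range are both that of B.  Existence uses that A is injective on the range
   of A^k, which holds because the kernels of the powers of A stop growing. *)
theory Submission
  imports Defs
begin

lemma cadj_cadj [simp]: "cadj (cadj A) = A"
  by (simp add: cadj_def vec_eq_iff)

lemma cadj_mult: "cadj (A ** B) = cadj B ** cadj A"
  by (simp add: cadj_def vec_eq_iff matrix_matrix_mult_def mult.commute)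

lemma matrix_diff_ldistrib:
  fixes A :: "'a::ring_1^'n^'m"
  shows "A ** (B - C) = A ** B - A ** C"
  by (simp add: vec_eq_iff matrix_matrix_mult_def sum_subtractf algebra_simps)

lemma cmatpow_Suc_left: "cmatpow A (Suc k) = A ** cmatpow A k"
proof -
  have "A ** cmatpow A k = cmatpow A k ** A"
    by (induction k) (simp_all add: matrix_mul_assoc)
  then show ?thesis by simp
qed

lemma subspace_colspace: "subspace (colspace M)"
  unfolding colspace_def
  by (rule linear_subspace_image[OF matrix_vector_mul_linear subspace_UNIV])

lemma colspace_mult_subset: "colspace (M ** N) \<subseteq> colspace M"
  unfolding colspace_def by (auto simp: matrix_vector_mul_assoc[symmetric])

lemma colspace_subset_iff_factor: "colspace M \<subseteq> colspace N \<longleftrightarrow> (\<exists>Z. M = N ** Z)"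
proof
  assume "colspace M \<subseteq> colspace N"
  then have "\<forall>j. \<exists>z. M *v axis j 1 = N *v z"
    unfolding colspace_def by blast
  then obtain z where z: "\<And>j. M *v axis j 1 = N *v z j" by metis
  have "M $ i $ j = (N ** (\<chi> i j. z j $ i)) $ i $ j" for i j
  proof -
    have "M $ i $ j = (M *v axis j 1) $ i"
      by (simp add: matrix_vector_mult_def axis_def if_distrib cong: if_cong)
    also have "\<dots> = (N *v z j) $ i" by (simp only: z)
    also have "\<dots> = (N ** (\<chi> i j. z j $ i)) $ i $ j"
      by (simp add: matrix_vector_mult_def matrix_matrix_mult_def)
    finally show ?thesis .
  qed
  then show "\<exists>Z. M = N ** Z" by (auto simp: vec_eq_iff)
qed (use colspace_mult_subset in blast)

lemma decreasing_subspace_chain_stabilises: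
  fixes S :: "nat \<Rightarrow> 'a::euclidean_space set"
  assumes sub: "\<And>j. subspace (S j)" and dec: "\<And>j. S (Suc j) \<subseteq> S j"
  shows "\<exists>j. S (Suc j) = S j"
proof (rule ccontr)
  assume "\<nexists>j. S (Suc j) = S j"
  then have lt: "dim (S (Suc j)) < dim (S j)" for j
    using subspace_dim_equal[OF sub sub dec] dim_subset[OF dec] by (metis le_neq_implies_less)
  have "dim (S j) + j \<le> dim (S 0)" for j
  proof (induction j)
    case (Suc j) then show ?case using lt[of j] by linarith
  qed simp
  from this[of "Suc (dim (S 0))"] show False by linarith
qed

lemma increasing_subspace_chain_stabilises:
  fixes S :: "nat \<Rightarrow> 'a::euclidean_space set"
  assumes sub: "\<And>j. subspace (S j)" and inc: "\<And>j. S j \<subseteq> S (Suc j)"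
  shows "\<exists>j. S (Suc j) = S j"
proof (rule ccontr)
  assume "\<nexists>j. S (Suc j) = S j"
  then have lt: "dim (S j) < dim (S (Suc j))" for j
    using subspace_dim_equal[OF sub sub inc] dim_subset[OF inc] by (metis le_neq_implies_less)
  have "j \<le> dim (S j)" for j
  proof (induction j)
    case (Suc j) then show ?case using lt[of j] by linarith
  qed simp
  from this[of "Suc DIM('a)"] show False using dim_subset_UNIV[of "S (Suc DIM('a))"] by linarith
qed

lemma colspace_cmatpow_stabilises: "\<exists>k. colspace (cmatpow A (Suc k)) = colspace (cmatpow A k)"
  by (rule decreasing_subspace_chain_stabilises)
    (simp_all only: subspace_colspace cmatpow.simps colspace_mult_subset)

lemma kernel_cmatpow_stabilises:
  "\<exists>k. {x. cmatpow A (Suc k) *v x = 0} = {x. cmatpow A k *v x = 0}"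
proof (rule increasing_subspace_chain_stabilises)
  show "subspace {x. cmatpow A k *v x = 0}" for k
    using linear_subspace_kernel[OF matrix_vector_mul_linear[of "cmatpow A k"]] by simp
  show "{x. cmatpow A k *v x = 0} \<subseteq> {x. cmatpow A (Suc k) *v x = 0}" for k
    by (auto simp del: cmatpow.simps simp: cmatpow_Suc_left matrix_vector_mul_assoc[symmetric])
qed

lemma cadj_mult_self_eq_0:
  fixes B :: "'n::finite cmat"
  assumes "cadj B ** B = 0"
  shows "B = 0"
proof -
  have "B $ i $ j = 0" for i j
  proof -
    have "(cadj B ** B) $ j $ j = of_real (\<Sum>l\<in>UNIV. (cmod (B $ l $ j))\<^sup>2)"
      by (simp only: of_real_sum complex_norm_square)
        (simp add: matrix_matrix_mult_def cadj_def mult.commute)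
    then have "(\<Sum>l\<in>UNIV. (cmod (B $ l $ j))\<^sup>2) = 0"
      using assms by (simp del: of_real_sum of_real_power)
    then show ?thesis by (simp add: sum_nonneg_eq_0_iff)
  qed
  then show ?thesis by (simp add: vec_eq_iff)
qed

lemma gram_mult_eq_0D:
  fixes A Z :: "'n::finite cmat"
  assumes "cadj A ** A ** Z = 0"
  shows "A ** Z = 0"
proof -
  have "cadj (A ** Z) ** (A ** Z) = cadj Z ** (cadj A ** A ** Z)"
    by (simp add: cadj_mult matrix_mul_assoc)
  also have "\<dots> = 0" using assms by simp
  finally show ?thesis by (rule cadj_mult_self_eq_0)
qed

lemma gram_power_mult_eq_0D:
  fixes A Z :: "'n::finite cmat"
  shows "cmatpow (cadj A ** A) k ** Z = 0 \<Longrightarrow> A ** Z = 0"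
proof (induction k arbitrary: Z)
  case (Suc k)
  have "A ** (cadj A ** A ** Z) = 0"
    by (rule Suc.IH) (use Suc.prems in \<open>simp add: matrix_mul_assoc\<close>)
  then have "cadj (cadj A) ** cadj A ** (A ** Z) = 0"
    by (simp add: matrix_mul_assoc)
  then have "cadj A ** A ** Z = 0"
    using gram_mult_eq_0D[of "cadj A" "A ** Z"] by (simp add: matrix_mul_assoc)
  then show ?case by (rule gram_mult_eq_0D)
qed simp

lemma colspace_subset_mult_cadj: "colspace A \<subseteq> colspace (A ** cadj A)"
proof -
  define H where "H = cadj A ** A"
  obtain k where "colspace (cmatpow H (Suc k)) = colspace (cmatpow H k)"
    using colspace_cmatpow_stabilises by blast
  then obtain W where W: "cmatpow H k = cmatpow H (Suc k) ** W"
    using colspace_subset_iff_factor by blast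
  have "cmatpow H k ** (mat 1 - H ** W) = cmatpow H k - cmatpow H (Suc k) ** W"
    by (simp add: matrix_diff_ldistrib matrix_mul_assoc)
  also have "\<dots> = 0" using W by simp
  finally have "A ** (mat 1 - H ** W) = 0"
    unfolding H_def by (rule gram_power_mult_eq_0D)
  then have "A = A ** cadj A ** (A ** W)"
    by (simp add: matrix_diff_ldistrib H_def matrix_mul_assoc)
  then show ?thesis by (metis colspace_subset_iff_factor)
qed

lemma gram_factor_projection:
  assumes W: "cadj A = cadj A ** A ** W"
  shows "cadj (A ** W) = A ** W" and "A ** W ** A = A"
proof -
  have "cadj (A ** W) = cadj W ** (cadj A ** A ** W)"
    by (simp add: cadj_mult flip: W)
  also have "\<dots> = cadj (A ** W) ** (A ** W)"
    by (simp add: cadj_mult matrix_mul_assoc)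
  finally show herm: "cadj (A ** W) = A ** W"
    by (metis cadj_cadj cadj_mult)
  have "A ** W ** A = cadj (A ** W) ** A" by (simp only: herm)
  also have "\<dots> = cadj (cadj A ** A ** W)" by (simp add: cadj_mult matrix_mul_assoc)
  finally show "A ** W ** A = A" by (simp flip: W)
qed

definition is_mp_inverse :: "'n::finite cmat \<Rightarrow> 'n cmat \<Rightarrow> bool" where
  "is_mp_inverse A X \<longleftrightarrow> A ** X ** A = A \<and> X ** A ** X = X \<and>
      cadj (A ** X) = A ** X \<and> cadj (X ** A) = X ** A"

lemma is_mp_inverse_exists: "\<exists>X. is_mp_inverse A X"
proof -
  obtain W where W: "cadj A = cadj A ** A ** W"
    using colspace_subset_mult_cadj[of "cadj A"] unfolding colspace_subset_iff_factor by auto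
  obtain V where "A = A ** cadj A ** V"
    using colspace_subset_mult_cadj[of A] unfolding colspace_subset_iff_factor by auto
  then have V: "cadj (cadj A) = cadj (cadj A) ** cadj A ** V" by simp
  \<comment> \<open>A W and A^* V are the orthogonal projectors onto the ranges of A and A^*.\<close>
  note P = gram_factor_projection[OF W] and Q = gram_factor_projection[OF V]
  define X where "X = cadj A ** V ** W"
  have AX: "A ** X = A ** W"
    using V by (simp add: X_def matrix_mul_assoc)
  have "X ** A = cadj (cadj A ** V) ** W ** A"
    by (simp add: X_def Q(1))
  also have "\<dots> = cadj V ** (A ** W ** A)"
    by (simp add: cadj_mult matrix_mul_assoc)
  also have "\<dots> = cadj (cadj A ** V)" by (simp add: P(2) cadj_mult)
  finally have XA: "X ** A = cadj A ** V" by (simp only: Q(1))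
  have "X ** A ** X = cadj A ** V ** cadj A ** V ** W"
    by (simp only: XA) (simp add: X_def matrix_mul_assoc)
  then have "X ** A ** X = X"
    by (simp add: Q(2) X_def)
  then have "is_mp_inverse A X"
    using P Q(1) by (simp add: is_mp_inverse_def AX XA)
  then show ?thesis ..
qed

lemma is_mp_inverse_cadj: "is_mp_inverse A X \<Longrightarrow> is_mp_inverse (cadj A) (cadj X)"
  unfolding is_mp_inverse_def by (metis cadj_cadj cadj_mult matrix_mul_assoc)

lemma is_mp_inverse_absorb:
  assumes X: "is_mp_inverse A X" and Y: "is_mp_inverse A Y"
  shows "X = X ** A ** Y"
proof -
  have AX: "A ** X = cadj X ** cadj A" and AY: "A ** Y = cadj Y ** cadj A"
    using X Y by (metis cadj_mult is_mp_inverse_def)+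
  have A: "cadj A = cadj A ** cadj Y ** cadj A"
    using Y unfolding is_mp_inverse_def by (metis cadj_mult matrix_mul_assoc)
  have "X = X ** (A ** X)"
    using X by (simp add: is_mp_inverse_def matrix_mul_assoc)
  also have "\<dots> = X ** cadj X ** (cadj A ** cadj Y ** cadj A)"
    by (simp flip: A add: AX matrix_mul_assoc)
  also have "\<dots> = X ** (A ** X) ** (A ** Y)"
    by (simp add: AX AY matrix_mul_assoc)
  also have "\<dots> = X ** A ** Y"
    using X by (simp add: is_mp_inverse_def matrix_mul_assoc)
  finally show ?thesis .
qed

lemma is_mp_inverse_unique:
  assumes X: "is_mp_inverse A X" and Y: "is_mp_inverse A Y"
  shows "X = Y"
proof -
  have "cadj Y = cadj Y ** cadj A ** cadj X"
    using is_mp_inverse_absorb[OF is_mp_inverse_cadj[OF Y] is_mp_inverse_cadj[OF X]] .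
  then have "Y = X ** A ** Y"
    by (metis cadj_cadj cadj_mult matrix_mul_assoc)
  with is_mp_inverse_absorb[OF X Y] show ?thesis by simp
qed

lemma is_mp_inverse_mp_inv: "is_mp_inverse A (mp_inv A)"
proof -
  have "\<exists>!X. is_mp_inverse A X"
    using is_mp_inverse_exists is_mp_inverse_unique by blast
  then show ?thesis
    unfolding mp_inv_def is_mp_inverse_def[symmetric] by (rule theI')
qed

lemma proj_mult_eq:
  assumes "colspace M \<subseteq> colspace A"
  shows "proj A ** M = M"
proof -
  obtain Z where "M = A ** Z" using assms colspace_subset_iff_factor by blast
  then show ?thesis
    using is_mp_inverse_mp_inv[of A] by (simp add: proj_def is_mp_inverse_def matrix_mul_assoc)
qed

lemma cadj_proj: "cadj (proj A) = proj A"
  using is_mp_inverse_mp_inv[of A] by (simp add: proj_def is_mp_inverse_def)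

lemma colspace_subset_cmatpow_mult:
  assumes "colspace B \<subseteq> colspace (A ** B)"
  shows "colspace B \<subseteq> colspace (cmatpow A j ** B)"
proof (induction j)
  case (Suc j)
  obtain W where "B = A ** B ** W" using assms colspace_subset_iff_factor by blast
  then have "cmatpow A j ** B = cmatpow A (Suc j) ** B ** W"
    by (metis cmatpow.simps(2) matrix_mul_assoc)
  then have "colspace (cmatpow A j ** B) \<subseteq> colspace (cmatpow A (Suc j) ** B)"
    using colspace_subset_iff_factor by blast
  with Suc.IH show ?case by blast
qed simp

lemma colspace_subset_mult_cancel:
  assumes sub: "colspace B \<subseteq> colspace (A ** B)" and ABS: "A ** B ** S = 0"
  shows "B ** S = 0"
proof -
  obtain J where J: "{x. cmatpow A (Suc J) *v x = 0} = {x. cmatpow A J *v x = 0}"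
    using kernel_cmatpow_stabilises by blast
  \<comment> \<open>Pushing B past the power J where the kernels of the powers of A stabilise.\<close>
  obtain V where V: "B = cmatpow A J ** B ** V"
    using colspace_subset_cmatpow_mult[OF sub] colspace_subset_iff_factor by blast
  have "B *v (S *v x) = 0" for x
  proof -
    have "cmatpow A (Suc J) *v ((B ** V) *v (S *v x)) = (A ** B ** S) *v x"
      by (subst (2) V) (simp add: cmatpow_Suc_left matrix_vector_mul_assoc matrix_mul_assoc
          del: cmatpow.simps)
    then have "cmatpow A J *v ((B ** V) *v (S *v x)) = 0"
      using J ABS by (metis (mono_tags) matrix_vector_mult_0 mem_Collect_eq)
    then show ?thesis
      by (subst V) (simp add: matrix_vector_mul_assoc matrix_mul_assoc)
  qed
  then show ?thesis by (simp add: matrix_eq matrix_vector_mul_assoc)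
qed

definition is_outer_inverse_range :: "'n::finite cmat \<Rightarrow> 'n cmat \<Rightarrow> 'n cmat \<Rightarrow> bool" where
  "is_outer_inverse_range A B X \<longleftrightarrow>
     X ** A ** X = X \<and> colspace X = colspace B \<and> colspace (cadj X) = colspace B"

lemma is_outer_inverse_range_eq:
  assumes W: "B = A ** B ** W" and X: "is_outer_inverse_range A B X"
  shows "X = B ** W ** mp_inv B"
proof -
  have "proj B ** cadj X = cadj X"
    using X by (simp add: is_outer_inverse_range_def proj_mult_eq)
  then have XP: "X ** proj B = X"
    by (metis cadj_cadj cadj_mult cadj_proj)
  obtain Z where "B = X ** Z"
    using X colspace_subset_iff_factor unfolding is_outer_inverse_range_def by blast
  then have XAB: "X ** A ** B = B"
    using X by (metis is_outer_inverse_range_def matrix_mul_assoc)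
  have "X = X ** B ** mp_inv B"
    using XP by (simp add: proj_def matrix_mul_assoc)
  also have "\<dots> = X ** (A ** B ** W) ** mp_inv B"
    by (simp only: W[symmetric])
  also have "\<dots> = B ** W ** mp_inv B"
    by (simp add: XAB matrix_mul_assoc)
  finally show ?thesis .
qed

lemma is_outer_inverse_range_exists:
  assumes AB: "colspace (A ** B) = colspace B" and W: "B = A ** B ** W"
  shows "is_outer_inverse_range A B (B ** W ** mp_inv B)"
proof -
  define G where "G = mp_inv B"
  define X where "X = B ** W ** G"
  have G: "B ** G ** B = B" "G ** B ** G = G" "cadj (B ** G) = B ** G"
    using is_mp_inverse_mp_inv[of B] by (simp_all add: is_mp_inverse_def G_def)
  have AX: "A ** X = B ** G"
    by (simp add: X_def matrix_mul_assoc flip: W)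
  have "X ** A ** X = B ** W ** (G ** B ** G)"
    by (simp only: matrix_mul_assoc[symmetric] AX) (simp add: X_def matrix_mul_assoc)
  then have "X ** A ** X = X"
    by (simp only: G(2) X_def)
  moreover have "colspace X = colspace B"
  proof
    show "colspace X \<subseteq> colspace B"
      unfolding X_def matrix_mul_assoc[symmetric] by (rule colspace_mult_subset)
    have "A ** B ** (W ** G ** (A ** B) - mat 1) = proj B ** (A ** B) - A ** B"
      by (simp add: matrix_diff_ldistrib proj_def G_def matrix_mul_assoc flip: W)
    also have "\<dots> = 0" using AB by (simp add: proj_mult_eq)
    finally have "B ** (W ** G ** (A ** B) - mat 1) = 0"
      using AB by (auto intro: colspace_subset_mult_cancel[of B A])
    then have "B = X ** (A ** B)"
      by (simp add: matrix_diff_ldistrib X_def matrix_mul_assoc)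
    then show "colspace B \<subseteq> colspace X" using colspace_subset_iff_factor by blast
  qed
  moreover have "colspace (cadj X) = colspace B"
  proof
    have "cadj G = cadj (G ** (B ** G))" using G(2) by (simp add: matrix_mul_assoc)
    also have "\<dots> = B ** G ** cadj G" by (simp only: cadj_mult[of G "B ** G"] G(3))
    finally have cG: "cadj G = B ** G ** cadj G" .
    have "cadj X = B ** (G ** cadj G ** cadj W ** cadj B)"
      unfolding X_def cadj_mult by (subst cG) (simp add: matrix_mul_assoc)
    then show "colspace (cadj X) \<subseteq> colspace B" using colspace_subset_iff_factor by blast
    have "cadj X ** (cadj A ** B) = cadj (A ** X) ** B"
      by (simp add: cadj_mult matrix_mul_assoc)
    also have "\<dots> = B" by (simp add: AX G)
    finally show "colspace B \<subseteq> colspace (cadj X)" using colspace_subset_iff_factor by metis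
  qed
  ultimately show ?thesis by (simp add: is_outer_inverse_range_def X_def G_def)
qed

lemma colspace_cmatpow_ind: "colspace (A ** cmatpow A (ind A)) = colspace (cmatpow A (ind A))"
proof -
  have "\<exists>k. colspace (cmatpow A k) = colspace (cmatpow A (Suc k))"
    using colspace_cmatpow_stabilises by metis
  then have "colspace (cmatpow A (ind A)) = colspace (cmatpow A (Suc (ind A)))"
    unfolding ind_def by (rule LeastI_ex)
  then show ?thesis by (simp add: cmatpow_Suc_left del: cmatpow.simps)
qed

lemma core_EP_eq_factor:
  obtains W where "cmatpow A (ind A) = A ** cmatpow A (ind A) ** W"
    and "core_EP A = cmatpow A (ind A) ** W ** mp_inv (cmatpow A (ind A))"
proof -
  define B where "B = cmatpow A (ind A)"
  have AB: "colspace (A ** B) = colspace B"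
    unfolding B_def by (rule colspace_cmatpow_ind)
  then obtain W where W: "B = A ** B ** W"
    using colspace_subset_iff_factor by (metis order_refl)
  have "core_EP A = (THE X. is_outer_inverse_range A B X)"
    by (simp add: core_EP_def is_outer_inverse_range_def B_def)
  also have "\<dots> = B ** W ** mp_inv B"
    using is_outer_inverse_range_exists[OF AB W] is_outer_inverse_range_eq[OF W] by blast
  finally show ?thesis using that W B_def by blast
qed

lemma core_EP_outer: "core_EP A ** A ** core_EP A = core_EP A"
proof -
  obtain W where W: "cmatpow A (ind A) = A ** cmatpow A (ind A) ** W"
    and C: "core_EP A = cmatpow A (ind A) ** W ** mp_inv (cmatpow A (ind A))"
    by (rule core_EP_eq_factor)
  from is_outer_inverse_range_exists[OF colspace_cmatpow_ind W] show ?thesis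
    by (simp add: is_outer_inverse_range_def C)
qed

lemma colspace_core_EP_subset: "colspace (core_EP A) \<subseteq> colspace (cmatpow A (ind A))"
  by (metis core_EP_eq_factor colspace_mult_subset matrix_mul_assoc)

lemma core_EP_square: "A ** core_EP A ** core_EP A = core_EP A"
proof -
  obtain W where W: "cmatpow A (ind A) = A ** cmatpow A (ind A) ** W"
    and C: "core_EP A = cmatpow A (ind A) ** W ** mp_inv (cmatpow A (ind A))"
    by (rule core_EP_eq_factor)
  have "A ** core_EP A = proj (cmatpow A (ind A))"
    by (simp add: C proj_def matrix_mul_assoc flip: W)
  then show ?thesis by (simp add: proj_mult_eq colspace_core_EP_subset)
qed

lemma proj_cmatpow_mult_core_EP: "proj (cmatpow A m) ** core_EP A = core_EP A"
proof (rule proj_mult_eq)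
  have "colspace (cmatpow A (ind A)) \<subseteq> colspace (cmatpow A m ** cmatpow A (ind A))"
    using colspace_cmatpow_ind colspace_subset_cmatpow_mult by blast
  then show "colspace (core_EP A) \<subseteq> colspace (cmatpow A m)"
    using colspace_core_EP_subset colspace_mult_subset by blast
qed

lemma mult_cmatpow_Suc_absorb:
  assumes "A ** C ** C = C"
  shows "A ** cmatpow C (Suc (Suc j)) = cmatpow C (Suc j)"
  using assms by (simp add: cmatpow_Suc_left matrix_mul_assoc del: cmatpow.simps)

lemma cmatpow_mult_cmatpow_absorb:
  assumes "A ** C ** C = C"
  shows "cmatpow A (Suc j) ** cmatpow C (Suc j) = A ** C"
proof (induction j)
  case (Suc j)
  have "cmatpow A (Suc (Suc j)) ** cmatpow C (Suc (Suc j))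
        = cmatpow A (Suc j) ** (A ** C ** C) ** cmatpow C j"
    by (simp only: cmatpow.simps(2)[of A "Suc j"] cmatpow_Suc_left[of C "Suc j"]
        cmatpow_Suc_left[of C j] matrix_mul_assoc)
  also have "\<dots> = cmatpow A (Suc j) ** cmatpow C (Suc j)"
    by (simp only: assms cmatpow_Suc_left[of C j] matrix_mul_assoc)
  finally show ?case using Suc.IH by simp
qed simp

lemma m_weak_core_eq:
  "m_weak_core A m = cmatpow (core_EP A) (Suc m) ** cmatpow A m ** proj (cmatpow A m)"
  by (simp add: m_weak_core_def m_weak_group_def)

lemma mult_m_weak_core:
  assumes "0 < m"
  shows "A ** m_weak_core A m = cmatpow (core_EP A) m ** cmatpow A m ** proj (cmatpow A m)"
proof -
  obtain j where m: "m = Suc j" using assms gr0_implies_Suc by blast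
  show ?thesis
    using mult_cmatpow_Suc_absorb[OF core_EP_square, of A j]
    by (simp add: m_weak_core_eq m matrix_mul_assoc del: cmatpow.simps)
qed

lemma m_weak_core_outer:
  assumes "0 < m"
  shows "m_weak_core A m ** A ** m_weak_core A m = m_weak_core A m"
proof -
  obtain j where m: "m = Suc j" using assms gr0_implies_Suc by blast
  define C where "C = core_EP A"
  define P where "P = proj (cmatpow A m)"
  have PC: "P ** cmatpow C m = cmatpow C m"
    using proj_cmatpow_mult_core_EP[of A m]
    by (simp add: m C_def P_def cmatpow_Suc_left matrix_mul_assoc del: cmatpow.simps)
  have AC: "cmatpow A m ** cmatpow C m = A ** C"
    unfolding m C_def by (rule cmatpow_mult_cmatpow_absorb[OF core_EP_square])
  have "m_weak_core A m ** A ** m_weak_core A m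
      = cmatpow C (Suc m) ** cmatpow A m ** (P ** cmatpow C m) ** cmatpow A m ** P"
    by (simp only: matrix_mul_assoc[symmetric] mult_m_weak_core[OF assms])
      (simp add: m_weak_core_eq C_def P_def matrix_mul_assoc)
  also have "\<dots> = cmatpow C m ** C ** (cmatpow A m ** cmatpow C m) ** cmatpow A m ** P"
    by (simp add: PC matrix_mul_assoc)
  also have "\<dots> = cmatpow C m ** (C ** A ** C) ** cmatpow A m ** P"
    by (simp only: AC matrix_mul_assoc)
  also have "\<dots> = m_weak_core A m"
    by (simp add: core_EP_outer m_weak_core_eq C_def P_def)
  finally show ?thesis .
qed

theorem theorem4p8:
  fixes A :: "complex^'n^'n" and m :: nat
  assumes "m \<ge> 1"
  shows "\<forall>X :: complex^'n^'n.
           (X ** A ** X = X \<and>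
            A ** X = cmatpow (core_EP A) m ** cmatpow A m ** proj (cmatpow A m) \<and>
            X ** A = cmatpow (core_EP A) (Suc m) ** cmatpow A m ** proj (cmatpow A m) ** A)
           \<longleftrightarrow> X = m_weak_core A m"
proof -
  have m: "0 < m" using assms by simp
  have AX: "cmatpow (core_EP A) m ** cmatpow A m ** proj (cmatpow A m) = A ** m_weak_core A m"
    by (simp add: mult_m_weak_core[OF m])
  have XA: "cmatpow (core_EP A) (Suc m) ** cmatpow A m ** proj (cmatpow A m) ** A
      = m_weak_core A m ** A"
    by (simp add: m_weak_core_eq)
  show ?thesis
    unfolding AX XA
  proof (intro allI iffI)
    fix X
    assume "X ** A ** X = X \<and> A ** X = A ** m_weak_core A m \<and> X ** A = m_weak_core A m ** A"
    then have "X = m_weak_core A m ** (A ** m_weak_core A m)"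
      by (metis matrix_mul_assoc)
    then show "X = m_weak_core A m"
      using m_weak_core_outer[OF m] by (simp add: matrix_mul_assoc)
  qed (simp add: m_weak_core_outer[OF m])
qed

end
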